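(* Let $M$ be an $n$-dimensional submanifold of $\mathbb{H}^m(-r)\subset\mathbb{R}^{m,1}$, and let $f(\cdot,t)$ and $F(\cdot,t)$ be the mean curvature flows of $M$ in $\mathbb{H}^m(-r)$ and in $\mathbb{R}^{m,1}$ respectively. Then for all $x\in M$, $$F(x,t)=\sqrt{1+\tfrac{2nt}{r}}\; f\Big(x,\tfrac{r}{2n}\ln\big(1+\tfrac{2nt}{r}\big)\Big)$$ whenever both sides are defined (in particular, the right-hand side, defined for $t>-r/(2n)$ with $\frac{r}{2n}\ln(1+\frac{2nt}{r})$ in the existence interval of $f$, solves the mean curvature flow of $M$ in $\mathbb{R}^{m,1}$).
   Context: $\mathbb{R}^{m,1}$ denotes $\mathbb{R}^{m+1}$ with $\langle x,y\rangle=\sum_{i=1}^m x_iy_i-x_{m+1}y_{m+1}$; $\mathbb{H}^m(-r)=\{x:\langle x,x\rangle=-r,\ x_{m+1}>0\}$. A mean curvature flow of a Riemannian submanifold $M$ in a semi-Riemannian manifold $X$ is a map $f:M\times I\to X$, $I$ an interval containing $0$, with $f(\cdot,0)$ the inclusion and $\partial_tf=H(\cdot,t)$, the (unnormalized) mean curvature vector of $f(\cdot,t)$ in $X$; solutions are taken to be unique. *)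

theory Defs
  imports "HOL-Analysis.Analysis"
begin

text \<open>Points of R^{m,1}: vectors indexed by 'k option, with None the time-like
  coordinate (index m+1) and Some i (i ranging over 'k, CARD('k) = m) the space-like ones.\<close>

definition lor :: "real^('k::finite option) \<Rightarrow> real^('k option) \<Rightarrow> real" where
  "lor x y = (\<Sum>i\<in>UNIV. x $ Some i * y $ Some i) - x $ None * y $ None"

definition hyp :: "real \<Rightarrow> (real^('k::finite option)) set" where
  "hyp r = {x. lor x x = - r \<and> x $ None > 0}"

definition dpart :: "(real^('n::finite) \<Rightarrow> 'b::real_normed_vector) \<Rightarrow> 'n \<Rightarrow> real^'n \<Rightarrow> 'b" where
  "dpart g i u = frechet_derivative g (at u) (axis i 1)"

definition twice_diff_on :: "(real^('n::finite)) set \<Rightarrow> (real^'n \<Rightarrow> 'b::real_normed_vector) \<Rightarrow> bool" where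
  "twice_diff_on U g \<longleftrightarrow> (\<forall>u\<in>U. g differentiable (at u) \<and> (\<forall>i. dpart g i differentiable (at u)))"

definition ind_metric :: "(real^('n::finite) \<Rightarrow> real^('k::finite option)) \<Rightarrow> real^'n \<Rightarrow> real^'n^'n" where
  "ind_metric g u = (\<chi> i j. lor (dpart g i u) (dpart g j u))"

definition spacelike_at :: "(real^('n::finite) \<Rightarrow> real^('k::finite option)) \<Rightarrow> real^'n \<Rightarrow> bool" where
  "spacelike_at g u \<longleftrightarrow> (\<forall>v. v \<noteq> 0 \<longrightarrow> v \<bullet> (ind_metric g u *v v) > 0)"

definition tan_proj :: "(real^('n::finite) \<Rightarrow> real^('k::finite option)) \<Rightarrow> real^'n \<Rightarrow> real^('k option) \<Rightarrow> real^('k option)" where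
  "tan_proj g u w = (\<Sum>k\<in>UNIV. \<Sum>l\<in>UNIV.
      (matrix_inv (ind_metric g u) $ k $ l * lor w (dpart g k u)) *\<^sub>R dpart g l u)"

text \<open>Mean curvature vector (trace of the second fundamental form, unnormalized)
  of a spacelike immersion into the flat space R^{m,1}.\<close>
definition mc_lor :: "(real^('n::finite) \<Rightarrow> real^('k::finite option)) \<Rightarrow> real^'n \<Rightarrow> real^('k option)" where
  "mc_lor g u = (\<Sum>i\<in>UNIV. \<Sum>j\<in>UNIV.
      matrix_inv (ind_metric g u) $ i $ j *\<^sub>R
        (dpart (dpart g j) i u - tan_proj g u (dpart (dpart g j) i u)))"

text \<open>Mean curvature vector of an immersion into H^m(-r): the Levi-Civita connection of
  H^m(-r) is the lor-orthogonal projection onto T_p H^m(-r) of the flat derivative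
  (Gauss formula); the normal of H^m(-r) at p is p, with lor p p = -r.\<close>
definition mc_hyp :: "real \<Rightarrow> (real^('n::finite) \<Rightarrow> real^('k::finite option)) \<Rightarrow> real^'n \<Rightarrow> real^('k option)" where
  "mc_hyp r g u = mc_lor g u + (lor (mc_lor g u) (g u) / r) *\<^sub>R g u"

definition chart :: "(real^('k::finite option)) set \<Rightarrow> (real^('n::finite)) set \<Rightarrow> (real^'n \<Rightarrow> real^('k option)) \<Rightarrow> bool" where
  "chart M U \<phi> \<longleftrightarrow> open U \<and> inj_on \<phi> U \<and> (\<exists>V. open V \<and> \<phi> ` U = M \<inter> V)
     \<and> continuous_on (\<phi> ` U) (inv_into U \<phi>) \<and> twice_diff_on U \<phi>
     \<and> (\<forall>u\<in>U. inj (frechet_derivative \<phi> (at u)))"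

text \<open>M is an n-dimensional (n = CARD('n)) C^2 submanifold of R^{m,1}.\<close>
definition submanifold :: "'n::finite itself \<Rightarrow> (real^('k::finite option)) set \<Rightarrow> bool" where
  "submanifold _ M \<longleftrightarrow> (\<forall>x\<in>M. \<exists>(U :: (real^'n) set) \<phi>. chart M U \<phi> \<and> x \<in> \<phi> ` U)"

definition spacelike_imm :: "'n::finite itself \<Rightarrow> (real^('k::finite option)) set \<Rightarrow> (real^('k option) \<Rightarrow> real^('k option)) \<Rightarrow> bool" where
  "spacelike_imm _ M h \<longleftrightarrow> (\<forall>(U :: (real^'n) set) \<phi>. chart M U \<phi> \<longrightarrow>
      twice_diff_on U (h \<circ> \<phi>) \<and> (\<forall>u\<in>U. spacelike_at (h \<circ> \<phi>) u))"

definition mcf_lor :: "'n::finite itself \<Rightarrow> (real^('k::finite option)) set \<Rightarrow> real set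
    \<Rightarrow> (real^('k option) \<Rightarrow> real \<Rightarrow> real^('k option)) \<Rightarrow> bool" where
  "mcf_lor N M I F \<longleftrightarrow> is_interval I \<and> 0 \<in> I \<and> (\<forall>x\<in>M. F x 0 = x)
     \<and> (\<forall>t\<in>I. spacelike_imm N M (\<lambda>x. F x t))
     \<and> (\<forall>x\<in>M. \<forall>t\<in>I. \<forall>(U :: (real^'n) set) \<phi> u. chart M U \<phi> \<and> u \<in> U \<and> \<phi> u = x \<longrightarrow>
          ((\<lambda>s. F x s) has_vector_derivative mc_lor (\<lambda>v. F (\<phi> v) t) u) (at t within I))"

definition mcf_hyp :: "'n::finite itself \<Rightarrow> real \<Rightarrow> (real^('k::finite option)) set \<Rightarrow> real set
    \<Rightarrow> (real^('k option) \<Rightarrow> real \<Rightarrow> real^('k option)) \<Rightarrow> bool" where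
  "mcf_hyp N r M I f \<longleftrightarrow> is_interval I \<and> 0 \<in> I \<and> (\<forall>x\<in>M. f x 0 = x)
     \<and> (\<forall>x\<in>M. \<forall>t\<in>I. f x t \<in> hyp r)
     \<and> (\<forall>t\<in>I. spacelike_imm N M (\<lambda>x. f x t))
     \<and> (\<forall>x\<in>M. \<forall>t\<in>I. \<forall>(U :: (real^'n) set) \<phi> u. chart M U \<phi> \<and> u \<in> U \<and> \<phi> u = x \<longrightarrow>
          ((\<lambda>s. f x s) has_vector_derivative mc_hyp r (\<lambda>v. f (\<phi> v) t) u) (at t within I))"

end

theory Submission imports Defs begin

text \<open>Scaling an immersion by c scales its induced metric by c^2 and hence its mean
  curvature vector H in R^{m,1} by 1/c. For an immersion g into H^m(-r), differentiating
  lor g g = -r twice and tracing against the inverse metric gives lor H g = -n, so its mean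
  curvature vector in H^m(-r) is H - (n/r) g. With \<sigma>(t) = sqrt (1 + 2nt/r) and
  \<tau>(t) = (r/2n) ln (1 + 2nt/r) one has \<sigma>\<tau>' = 1/\<sigma> and \<sigma>' = n/(r\<sigma>), so the velocity of
  \<sigma>(t) f(x,\<tau>(t)) is (1/\<sigma>) H + (n/(r\<sigma>) - n/(r\<sigma>)) f, the mean curvature vector of \<sigma> f in
  R^{m,1}. Uniqueness identifies this flow with F.\<close>

subsection \<open>The Lorentzian product\<close>

definition time_reflect :: "real^('k::finite option) \<Rightarrow> real^('k option)" where
  "time_reflect y = (\<chi> j. if j = None then - y$j else y$j)"

lemma lor_eq_inner_time_reflect: "lor x y = x \<bullet> time_reflect y"
proof -
  have "x \<bullet> time_reflect y = (\<Sum>j\<in>insert None (range Some). x$j * time_reflect y $ j)"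
    by (simp add: inner_vec_def UNIV_option_conv[symmetric])
  also have "\<dots> = x$None * (- y$None) + (\<Sum>j\<in>range Some. x$j * time_reflect y $ j)"
    by (subst sum.insert) (auto simp: time_reflect_def)
  also have "(\<Sum>j\<in>range Some. x$j * time_reflect y $ j) = (\<Sum>i\<in>UNIV. x$Some i * y$Some i)"
    by (subst sum.reindex) (auto simp: time_reflect_def)
  finally show ?thesis unfolding lor_def by simp
qed

lemma linear_time_reflect: "linear time_reflect"
  by (rule linearI) (auto simp: time_reflect_def vec_eq_iff)

lemma bounded_bilinear_lor: "bounded_bilinear lor"
proof -
  have "bounded_bilinear (\<lambda>x y. id x \<bullet> time_reflect y)"
    using bounded_bilinear.comp[OF bounded_bilinear_inner bounded_linear_ident, of time_reflect]
      linear_time_reflect linear_conv_bounded_linear by auto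
  thus ?thesis by (simp add: lor_eq_inner_time_reflect[abs_def])
qed

interpretation lor: bounded_bilinear lor
  by (rule bounded_bilinear_lor)

lemma lor_commute: "lor x y = lor y x"
  unfolding lor_def by (simp add: mult.commute)

subsection \<open>Immersions into a pseudo-sphere\<close>

lemma lor_derivative_eq_0_if_constant:
  assumes U: "open U" "u \<in> U" and a: "a differentiable at u" and b: "b differentiable at u"
    and const: "\<forall>v\<in>U. lor (a v) (b v) = c"
  shows "lor (frechet_derivative a (at u) h) (b u) + lor (a u) (frechet_derivative b (at u) h) = 0"
proof -
  have "((\<lambda>v. lor (a v) (b v)) has_derivative
      (\<lambda>h. lor (a u) (frechet_derivative b (at u) h) + lor (frechet_derivative a (at u) h) (b u))) (at u)"
    using lor.FDERIV a b frechet_derivative_works by blast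
  moreover have "((\<lambda>v. lor (a v) (b v)) has_derivative (\<lambda>h. 0)) (at u)"
    by (rule has_derivative_transform_within_open[OF has_derivative_const[of c] U]) (use const in auto)
  ultimately have "(\<lambda>h. lor (a u) (frechet_derivative b (at u) h) + lor (frechet_derivative a (at u) h) (b u))
      = (\<lambda>h. 0)"
    by (rule has_derivative_unique)
  from fun_cong[OF this, of h] show ?thesis by simp
qed

lemma lor_dpart_self_eq_0:
  assumes U: "open U" "u \<in> U" and g: "g differentiable at u"
    and const: "\<forall>v\<in>U. lor (g v) (g v) = c"
  shows "lor (dpart g i u) (g u) = 0"
  using lor_derivative_eq_0_if_constant[OF U g g const, of "axis i 1"]
  by (simp add: dpart_def lor_commute[of "g u"])

lemma lor_dpart2_self:
  assumes U: "open U" "u \<in> U" and tw: "twice_diff_on U g"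
    and const: "\<forall>v\<in>U. lor (g v) (g v) = c"
  shows "lor (dpart (dpart g j) i u) (g u) = - lor (dpart g j u) (dpart g i u)"
proof -
  have "\<forall>v\<in>U. lor (dpart g j v) (g v) = 0"
    using lor_dpart_self_eq_0[OF U(1) _ _ const] tw unfolding twice_diff_on_def by blast
  from lor_derivative_eq_0_if_constant[OF U _ _ this, of "axis i 1"] show ?thesis
    using tw U unfolding twice_diff_on_def by (simp add: dpart_def[of _ i] algebra_simps)
qed

lemma matrix_inv_is_inverse:
  assumes "invertible A"
  shows "A ** matrix_inv A = mat 1 \<and> matrix_inv A ** A = mat 1"
  using assms unfolding invertible_def matrix_inv_def by (rule someI_ex)

lemma invertible_ind_metric_if_spacelike:
  assumes "spacelike_at g u"
  shows "invertible (ind_metric g u)"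
proof -
  have "\<forall>x. ind_metric g u *v x = 0 \<longrightarrow> x = 0"
    using assms unfolding spacelike_at_def by (metis inner_zero_right less_irrefl)
  then obtain B where "B ** ind_metric g u = mat 1"
    using matrix_left_invertible_ker by blast
  then show ?thesis unfolding invertible_def using matrix_left_right_inverse by blast
qed

lemma lor_mc_lor_self_if_pseudospherical:
  fixes g :: "real^('n::finite) \<Rightarrow> real^('k::finite option)"
  assumes U: "open U" "u \<in> U" and tw: "twice_diff_on U g"
    and A: "invertible (ind_metric g u)" and const: "\<forall>v\<in>U. lor (g v) (g v) = c"
  shows "lor (mc_lor g u) (g u) = - real CARD('n)"
proof -
  have d: "g differentiable at u" using tw U unfolding twice_diff_on_def by blast
  let ?A = "ind_metric g u" and ?B = "matrix_inv (ind_metric g u)"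
  have tangent: "lor (tan_proj g u w) (g u) = 0" for w
    unfolding tan_proj_def
    by (simp add: lor.sum_left lor.scaleR_left lor_dpart_self_eq_0[OF U d const])
  have "lor (mc_lor g u) (g u) = (\<Sum>i\<in>UNIV. \<Sum>j\<in>UNIV. ?B $ i $ j * (- ?A $ j $ i))"
    unfolding mc_lor_def
    by (simp add: lor.sum_left lor.scaleR_left lor.diff_left tangent
        lor_dpart2_self[OF U tw const] ind_metric_def)
  also have "\<dots> = - (\<Sum>i\<in>UNIV. (?B ** ?A) $ i $ i)"
    by (simp add: matrix_matrix_mult_def sum_negf)
  also have "\<dots> = - real CARD('n)"
    using matrix_inv_is_inverse[OF A] by (simp add: mat_def)
  finally show ?thesis .
qed

lemma mc_hyp_eq_if_pseudospherical:
  fixes g :: "real^('n::finite) \<Rightarrow> real^('k::finite option)"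
  assumes "open U" "u \<in> U" "twice_diff_on U g"
    and "invertible (ind_metric g u)" "\<forall>v\<in>U. lor (g v) (g v) = - r"
  shows "mc_hyp r g u = mc_lor g u - (real CARD('n) / r) *\<^sub>R g u"
  unfolding mc_hyp_def lor_mc_lor_self_if_pseudospherical[OF assms]
  by (simp add: scaleR_diff_left)

subsection \<open>Scaling an immersion\<close>

lemma dpart_scaleR:
  assumes "g differentiable at v"
  shows "dpart (\<lambda>w. c *\<^sub>R g w) i v = c *\<^sub>R dpart g i v"
proof -
  have "((\<lambda>w. c *\<^sub>R g w) has_derivative (\<lambda>h. c *\<^sub>R frechet_derivative g (at v) h)) (at v)"
    using has_derivative_scaleR_right assms frechet_derivative_works by blast
  from frechet_derivative_at[OF this] show ?thesis
    unfolding dpart_def by metis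
qed

lemma dpart_scaleR_has_derivative:
  assumes U: "open U" "u \<in> U" and tw: "twice_diff_on U g"
  shows "(dpart (\<lambda>w. c *\<^sub>R g w) j has_derivative
           (\<lambda>h. c *\<^sub>R frechet_derivative (dpart g j) (at u) h)) (at u)"
proof -
  have "dpart g j differentiable at u" using tw U unfolding twice_diff_on_def by blast
  then have "((\<lambda>w. c *\<^sub>R dpart g j w) has_derivative
      (\<lambda>h. c *\<^sub>R frechet_derivative (dpart g j) (at u) h)) (at u)"
    using has_derivative_scaleR_right frechet_derivative_works by blast
  moreover have "\<forall>v\<in>U. dpart (\<lambda>w. c *\<^sub>R g w) j v = c *\<^sub>R dpart g j v"
    using tw dpart_scaleR unfolding twice_diff_on_def by blast
  ultimately show ?thesis
    using has_derivative_transform_within_open[OF _ U] by force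
qed

lemma dpart2_scaleR:
  assumes "open U" "u \<in> U" "twice_diff_on U g"
  shows "dpart (dpart (\<lambda>w. c *\<^sub>R g w) j) i u = c *\<^sub>R dpart (dpart g j) i u"
  using frechet_derivative_at[OF dpart_scaleR_has_derivative[OF assms]]
  unfolding dpart_def[of "dpart _ j"] by metis

lemma twice_diff_on_scaleR:
  assumes "open U" and tw: "twice_diff_on U g"
  shows "twice_diff_on U (\<lambda>w. c *\<^sub>R g w)"
  unfolding twice_diff_on_def
proof (intro ballI conjI allI)
  fix u i assume u: "u \<in> U"
  show "(\<lambda>w. c *\<^sub>R g w) differentiable at u"
    using tw u unfolding twice_diff_on_def by (auto intro: differentiable_scaleR)
  show "dpart (\<lambda>w. c *\<^sub>R g w) i differentiable at u"
    using dpart_scaleR_has_derivative[OF assms(1) u tw] unfolding differentiable_def by blast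
qed

lemma ind_metric_scaleR:
  assumes "g differentiable at u"
  shows "ind_metric (\<lambda>w. c *\<^sub>R g w) u = c\<^sup>2 *\<^sub>R ind_metric g u"
  unfolding ind_metric_def dpart_scaleR[OF assms]
  by (simp add: vec_eq_iff lor.scaleR_left lor.scaleR_right power2_eq_square)

lemma matrix_inv_scaleR:
  fixes A :: "real^'n^'n"
  assumes A: "invertible A" and k: "k \<noteq> 0"
  shows "matrix_inv (k *\<^sub>R A) = (1/k) *\<^sub>R matrix_inv A"
proof -
  let ?B = "(1/k) *\<^sub>R matrix_inv A"
  have inverse: "(k *\<^sub>R A) ** ?B = mat 1 \<and> ?B ** (k *\<^sub>R A) = mat 1"
    using matrix_inv_is_inverse[OF A] k by (simp add: matrix_scalar_ac)
  have unique: "X = ?B" if "(k *\<^sub>R A) ** X = mat 1 \<and> X ** (k *\<^sub>R A) = mat 1" for X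
  proof -
    have "X = X ** ((k *\<^sub>R A) ** ?B)" using inverse by simp
    also have "\<dots> = (X ** (k *\<^sub>R A)) ** ?B" by (simp add: matrix_mul_assoc)
    also have "\<dots> = ?B" using that by simp
    finally show ?thesis .
  qed
  show ?thesis unfolding matrix_inv_def[of "k *\<^sub>R A"]
    by (rule some_equality) (use inverse unique in blast)+
qed

lemma matrix_inv_ind_metric_scaleR:
  assumes "g differentiable at u" "invertible (ind_metric g u)" "c \<noteq> 0"
  shows "matrix_inv (ind_metric (\<lambda>w. c *\<^sub>R g w) u) = (1 / c\<^sup>2) *\<^sub>R matrix_inv (ind_metric g u)"
  using ind_metric_scaleR[OF assms(1)] matrix_inv_scaleR[OF assms(2)] assms(3) by simp

lemma tan_proj_scaleR:
  assumes d: "g differentiable at u" and A: "invertible (ind_metric g u)" and c: "c \<noteq> 0"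
  shows "tan_proj (\<lambda>w. c *\<^sub>R g w) u (c *\<^sub>R x) = c *\<^sub>R tan_proj g u x"
  unfolding tan_proj_def matrix_inv_ind_metric_scaleR[OF assms] dpart_scaleR[OF d]
  by (simp add: lor.scaleR_left lor.scaleR_right scaleR_sum_right power2_eq_square c mult_ac)

lemma mc_lor_scaleR:
  assumes U: "open U" "u \<in> U" and tw: "twice_diff_on U g"
    and A: "invertible (ind_metric g u)" and c: "c \<noteq> 0"
  shows "mc_lor (\<lambda>w. c *\<^sub>R g w) u = (1/c) *\<^sub>R mc_lor g u"
proof -
  have d: "g differentiable at u" using tw U unfolding twice_diff_on_def by blast
  show ?thesis
    unfolding mc_lor_def matrix_inv_ind_metric_scaleR[OF d A c] dpart2_scaleR[OF U tw]
      tan_proj_scaleR[OF d A c]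
    by (simp add: scaleR_sum_right scaleR_diff_right[symmetric] power2_eq_square c)
qed

lemma spacelike_at_scaleR:
  assumes d: "g differentiable at u" and sp: "spacelike_at g u" and c: "c \<noteq> 0"
  shows "spacelike_at (\<lambda>w. c *\<^sub>R g w) u"
  unfolding spacelike_at_def ind_metric_scaleR[OF d]
proof (intro allI impI)
  fix v :: "real^'a" assume "v \<noteq> 0"
  then have "v \<bullet> (ind_metric g u *v v) > 0" using sp unfolding spacelike_at_def by blast
  moreover have "(c\<^sup>2 *\<^sub>R ind_metric g u) *v v = c\<^sup>2 *\<^sub>R (ind_metric g u *v v)"
    by (simp add: vec_eq_iff matrix_vector_mult_def sum_distrib_left mult_ac)
  ultimately show "v \<bullet> ((c\<^sup>2 *\<^sub>R ind_metric g u) *v v) > 0"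
    using c by simp
qed

lemma spacelike_imm_scaleR:
  fixes N :: "'n::finite itself"
  assumes "spacelike_imm N M h" "c \<noteq> 0"
  shows "spacelike_imm N M (\<lambda>x. c *\<^sub>R h x)"
  unfolding spacelike_imm_def
proof (intro allI impI conjI ballI)
  fix U :: "(real^'n) set" and \<phi> assume ch: "chart M U \<phi>"
  have U: "open U" using ch unfolding chart_def by blast
  have h: "twice_diff_on U (\<lambda>v. h (\<phi> v))" "\<forall>u\<in>U. spacelike_at (\<lambda>v. h (\<phi> v)) u"
    using assms(1) ch unfolding spacelike_imm_def comp_def by auto
  show "twice_diff_on U ((\<lambda>x. c *\<^sub>R h x) \<circ> \<phi>)"
    using twice_diff_on_scaleR[OF U h(1)] by (simp add: comp_def)
  fix u assume "u \<in> U"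
  then show "spacelike_at ((\<lambda>x. c *\<^sub>R h x) \<circ> \<phi>) u"
    using spacelike_at_scaleR[of "\<lambda>v. h (\<phi> v)"] h assms(2) unfolding twice_diff_on_def comp_def
    by blast
qed

subsection \<open>The time change\<close>

lemma rescaled_time_has_derivative:
  assumes "r > 0" "n > 0" and S: "1 + 2 * n * t / r > 0"
  shows "((\<lambda>t. r / (2 * n) * ln (1 + 2 * n * t / r)) has_real_derivative
           1 / (1 + 2 * n * t / r)) (at t)"
proof -
  have "((\<lambda>t. r / (2 * n) * ln (1 + 2 * n * t / r)) has_real_derivative
      r / (2 * n) * (2 * n / r / (1 + 2 * n * t / r))) (at t)"
    using S by (auto intro!: derivative_eq_intros)
  moreover have "r / (2 * n) * (2 * n / r / (1 + 2 * n * t / r)) = 1 / (1 + 2 * n * t / r)"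
    using assms by (simp add: field_simps)
  ultimately show ?thesis by simp
qed

lemma rescaling_factor_has_derivative:
  assumes "r > 0" and S: "1 + 2 * n * t / r > 0"
  shows "((\<lambda>t. sqrt (1 + 2 * n * t / r)) has_real_derivative
           n / (r * sqrt (1 + 2 * n * t / r))) (at t)"
proof -
  have "((\<lambda>t. sqrt (1 + 2 * n * t / r)) has_real_derivative
      inverse (sqrt (1 + 2 * n * t / r)) / 2 * (2 * n / r)) (at t)"
    using assms by (auto intro!: derivative_eq_intros)
  then show ?thesis using assms by (simp add: field_simps)
qed

lemma is_interval_rescaled_domain:
  fixes r n :: real
  assumes r: "r > 0" and n: "n > 0" and I: "is_interval I"
  shows "is_interval {t. - r / (2 * n) < t \<and> r / (2 * n) * ln (1 + 2 * n * t / r) \<in> I}"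
    (is "is_interval ?K")
  unfolding is_interval_1
proof (intro ballI allI impI)
  define \<tau> where "\<tau> t = r / (2 * n) * ln (1 + 2 * n * t / r)" for t
  have pos: "1 + 2 * n * t / r > 0" if "- r / (2 * n) < t" for t
    using that r n by (simp add: field_simps)
  have mono: "\<tau> a \<le> \<tau> b" if "- r / (2 * n) < a" "a \<le> b" for a b
  proof -
    have "1 + 2 * n * a / r \<le> 1 + 2 * n * b / r"
      using that r n by (simp add: divide_right_mono)
    then have "ln (1 + 2 * n * a / r) \<le> ln (1 + 2 * n * b / r)"
      using pos that by simp
    then show ?thesis unfolding \<tau>_def using r n by (intro mult_left_mono) auto
  qed
  fix a b y assume a: "a \<in> ?K" and b: "b \<in> ?K" and y: "a \<le> y \<and> y \<le> b"
  then have "- r / (2 * n) < y" by auto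
  moreover have "\<tau> a \<le> \<tau> y" "\<tau> y \<le> \<tau> b"
    using mono a y calculation by auto
  then have "\<tau> y \<in> I" using I a b unfolding is_interval_1 \<tau>_def by blast
  ultimately show "y \<in> ?K" unfolding \<tau>_def by simp
qed

lemma rescaled_curve_has_vector_derivative:
  fixes \<gamma> :: "real \<Rightarrow> 'a::real_normed_vector" and r n :: real
  defines "\<sigma> \<equiv> \<lambda>t. sqrt (1 + 2 * n * t / r)"
    and "\<tau> \<equiv> \<lambda>t. r / (2 * n) * ln (1 + 2 * n * t / r)"
  assumes r: "r > 0" and n: "n > 0" and t: "- r / (2 * n) < t" and K: "\<tau> ` K \<subseteq> I"
    and \<gamma>: "(\<gamma> has_vector_derivative (H - (n / r) *\<^sub>R \<gamma> (\<tau> t))) (at (\<tau> t) within I)"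
  shows "((\<lambda>s. \<sigma> s *\<^sub>R \<gamma> (\<tau> s)) has_vector_derivative (1 / \<sigma> t) *\<^sub>R H) (at t within K)"
proof -
  define S where "S = 1 + 2 * n * t / r"
  have S: "S > 0" using t r n by (simp add: S_def field_simps)
  have \<sigma>_sq: "\<sigma> t * \<sigma> t = S" and \<sigma>_pos: "\<sigma> t > 0"
    using S by (simp_all add: \<sigma>_def S_def)
  have "(\<tau> has_vector_derivative 1 / S) (at t within K)"
    using rescaled_time_has_derivative[OF r n S[unfolded S_def]] unfolding \<tau>_def S_def
    by (simp add: has_real_derivative_iff_has_vector_derivative has_vector_derivative_at_within)
  moreover have "(\<gamma> has_vector_derivative (H - (n / r) *\<^sub>R \<gamma> (\<tau> t))) (at (\<tau> t) within \<tau> ` K)"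
    using \<gamma> K by (rule has_vector_derivative_within_subset)
  ultimately have \<gamma>\<tau>: "(\<gamma> \<circ> \<tau> has_vector_derivative (1 / S) *\<^sub>R (H - (n / r) *\<^sub>R \<gamma> (\<tau> t))) (at t within K)"
    by (rule vector_diff_chain_within)
  moreover have \<sigma>: "(\<sigma> has_real_derivative n / (r * \<sigma> t)) (at t within K)"
    using rescaling_factor_has_derivative[OF r S[unfolded S_def]] unfolding \<sigma>_def
    by (rule has_field_derivative_at_within)
  have "((\<lambda>s. \<sigma> s *\<^sub>R (\<gamma> \<circ> \<tau>) s) has_vector_derivative
      \<sigma> t *\<^sub>R ((1 / S) *\<^sub>R (H - (n / r) *\<^sub>R \<gamma> (\<tau> t))) + (n / (r * \<sigma> t)) *\<^sub>R \<gamma> (\<tau> t)) (at t within K)"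
    using has_vector_derivative_scaleR[OF \<sigma> \<gamma>\<tau>] by simp
  moreover have "\<sigma> t / S = 1 / \<sigma> t" and "\<sigma> t * n / (S * r) = n / (r * \<sigma> t)"
    using \<sigma>_sq \<sigma>_pos S r by (simp_all add: field_simps)
  then have "\<sigma> t *\<^sub>R ((1 / S) *\<^sub>R (H - (n / r) *\<^sub>R \<gamma> (\<tau> t))) + (n / (r * \<sigma> t)) *\<^sub>R \<gamma> (\<tau> t)
      = (1 / \<sigma> t) *\<^sub>R H"
    by (simp add: scaleR_diff_right)
  ultimately show ?thesis by (simp add: comp_def)
qed

subsection \<open>Mean curvature flows\<close>

lemma mcf_hyp_has_vector_derivative_mc_lor:
  fixes f :: "real^('k::finite option) \<Rightarrow> real \<Rightarrow> real^('k option)"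
    and U :: "(real^'n::finite) set"
  assumes f_flow: "mcf_hyp TYPE('n) r M I f"
    and x: "x \<in> M" and t: "t \<in> I" and chart: "chart M U \<phi>" "u \<in> U" "\<phi> u = x"
  shows "((\<lambda>s. f x s) has_vector_derivative
           mc_lor (\<lambda>v. f (\<phi> v) t) u - (real CARD('n) / r) *\<^sub>R f x t) (at t within I)"
proof -
  define h where "h v = f (\<phi> v) t" for v
  have U: "open U" and in_M: "\<forall>v\<in>U. \<phi> v \<in> M"
    using chart(1) unfolding chart_def by blast+
  have h: "twice_diff_on U h" "invertible (ind_metric h u)"
    using f_flow t chart invertible_ind_metric_if_spacelike
    unfolding mcf_hyp_def spacelike_imm_def comp_def h_def by blast+
  have "\<forall>v\<in>U. lor (h v) (h v) = - r"
    using f_flow in_M t unfolding mcf_hyp_def h_def hyp_def by blast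
  then have "mc_hyp r h u = mc_lor h u - (real CARD('n) / r) *\<^sub>R f x t"
    using mc_hyp_eq_if_pseudospherical[OF U chart(2) h] chart(3) by (simp add: h_def)
  then show ?thesis
    using f_flow x t chart unfolding mcf_hyp_def h_def by metis
qed

lemma mcf_lor_rescaled_mcf_hyp:
  fixes f :: "real^('k::finite option) \<Rightarrow> real \<Rightarrow> real^('k option)"
  assumes r: "r > 0" and f_flow: "mcf_hyp TYPE('n::finite) r M I f"
  shows "mcf_lor TYPE('n) M
           {t. - r / (2 * real CARD('n)) < t
               \<and> r / (2 * real CARD('n)) * ln (1 + 2 * real CARD('n) * t / r) \<in> I}
           (\<lambda>x t. sqrt (1 + 2 * real CARD('n) * t / r) *\<^sub>R
                    f x (r / (2 * real CARD('n)) * ln (1 + 2 * real CARD('n) * t / r)))"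
proof -
  define n where "n = real CARD('n)"
  define \<sigma> where "\<sigma> t = sqrt (1 + 2 * n * t / r)" for t
  define \<tau> where "\<tau> t = r / (2 * n) * ln (1 + 2 * n * t / r)" for t
  define K where "K = {t. - r / (2 * n) < t \<and> \<tau> t \<in> I}"
  have n: "n > 0" by (simp add: n_def)
  from f_flow have I: "is_interval I" "0 \<in> I" and f0: "\<forall>x\<in>M. f x 0 = x"
    and f_spacelike: "\<forall>t\<in>I. spacelike_imm TYPE('n) M (\<lambda>x. f x t)"
    unfolding mcf_hyp_def by blast+
  have \<sigma>_pos: "\<sigma> t > 0" if "t \<in> K" for t
    using that r n by (simp add: K_def \<sigma>_def field_simps)
  have "is_interval K"
    unfolding K_def \<tau>_def using is_interval_rescaled_domain[OF r n I(1)] .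
  moreover have "0 \<in> K" and "\<forall>x\<in>M. \<sigma> 0 *\<^sub>R f x (\<tau> 0) = x"
    using I(2) f0 r n by (simp_all add: K_def \<sigma>_def \<tau>_def)
  moreover have "\<forall>t\<in>K. spacelike_imm TYPE('n) M (\<lambda>x. \<sigma> t *\<^sub>R f x (\<tau> t))"
    using f_spacelike spacelike_imm_scaleR \<sigma>_pos by (fastforce simp: K_def)
  moreover have "((\<lambda>s. \<sigma> s *\<^sub>R f x (\<tau> s)) has_vector_derivative
      mc_lor (\<lambda>v. \<sigma> t *\<^sub>R f (\<phi> v) (\<tau> t)) u) (at t within K)"
    if x: "x \<in> M" and t: "t \<in> K" and chart: "chart M U \<phi>" "u \<in> U" "\<phi> u = x"
    for x t and U :: "(real^'n) set" and \<phi> u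
  proof -
    have \<tau>t: "\<tau> t \<in> I" using t by (simp add: K_def)
    have U: "open U" using chart(1) unfolding chart_def by blast
    have h: "twice_diff_on U (\<lambda>v. f (\<phi> v) (\<tau> t))" "invertible (ind_metric (\<lambda>v. f (\<phi> v) (\<tau> t)) u)"
      using f_spacelike \<tau>t chart invertible_ind_metric_if_spacelike
      unfolding spacelike_imm_def comp_def by blast+
    have "((\<lambda>s. \<sigma> s *\<^sub>R f x (\<tau> s)) has_vector_derivative
        (1 / \<sigma> t) *\<^sub>R mc_lor (\<lambda>v. f (\<phi> v) (\<tau> t)) u) (at t within K)"
      using rescaled_curve_has_vector_derivative[OF r n, of t K I "\<lambda>s. f x s"] t
        mcf_hyp_has_vector_derivative_mc_lor[OF f_flow x \<tau>t chart]
      unfolding \<sigma>_def \<tau>_def K_def n_def by fastforce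
    then show ?thesis
      using mc_lor_scaleR[OF U chart(2) h] \<sigma>_pos[OF t] by simp
  qed
  ultimately show ?thesis
    unfolding mcf_lor_def K_def \<sigma>_def \<tau>_def n_def by blast
qed

theorem lemma3p2:
  fixes M :: "(real^('k::finite option)) set"
    and r :: real and I J :: "real set"
    and f F :: "real^('k option) \<Rightarrow> real \<Rightarrow> real^('k option)"
  assumes r_pos: "r > 0"
    and subM: "submanifold TYPE('n::finite) M"
    and M_hyp: "M \<subseteq> hyp r"
    and f_flow: "mcf_hyp TYPE('n) r M I f"
    and F_flow: "mcf_lor TYPE('n) M J F"
    and F_unique: "\<forall>J' F'. mcf_lor TYPE('n) M J' F' \<longrightarrow> (\<forall>x\<in>M. \<forall>t\<in>J \<inter> J'. F' x t = F x t)"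
  shows "mcf_lor TYPE('n) M
           {t. - r / (2 * real CARD('n)) < t
               \<and> r / (2 * real CARD('n)) * ln (1 + 2 * real CARD('n) * t / r) \<in> I}
           (\<lambda>x t. sqrt (1 + 2 * real CARD('n) * t / r) *\<^sub>R
                    f x (r / (2 * real CARD('n)) * ln (1 + 2 * real CARD('n) * t / r)))
       \<and> (\<forall>x\<in>M. \<forall>t\<in>J. - r / (2 * real CARD('n)) < t
               \<and> r / (2 * real CARD('n)) * ln (1 + 2 * real CARD('n) * t / r) \<in> I \<longrightarrow>
            F x t = sqrt (1 + 2 * real CARD('n) * t / r) *\<^sub>R
                    f x (r / (2 * real CARD('n)) * ln (1 + 2 * real CARD('n) * t / r)))"
  using mcf_lor_rescaled_mcf_hyp[OF r_pos f_flow] F_unique by auto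

end
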